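(* Let $m\ge 2$, $\mathfrak m=1/(2m-1)$, and $s_n=\sum_{k=0}^{n-1}(-\mathfrak m)^k$ for $n\ge 1$, $s_0=0$. Let $x_0x_1x_2\dots$ be a random freely reduced infinite word in $m$ generators. For any letters $x,y$ (not necessarily distinct) and any $n\ge1$, the conditional probability $P_n(x,y)=\Pr(x_n=x\mid x_0=y)$ lies between $\mathfrak m\cdot s_{n-1}$ and $\mathfrak m\cdot s_n$ (i.e. between the smaller and the larger of these two numbers). In particular, $$\frac{2m-2}{(2m-1)^2}\le \Pr(x_2=x\mid x_0=y)\le \frac1{2m-1}.$$
   Context: Letters are the $2m$ elements $a_1^{\pm1},\dots,a_m^{\pm1}$. A random freely reduced infinite word is chosen so that $x_0$ is uniform among the $2m$ letters and each $x_{i+1}$ is uniform among the $2m-1$ letters different from $x_i^{-1}$. *)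

theory Defs
  imports Complex_Main
begin

text \<open>Letters: the pair (i, True) stands for a_i, (i, False) for a_i^{-1}, with i < m.\<close>
type_synonym letter = "nat \<times> bool"

definition letters :: "nat \<Rightarrow> letter set" where
  "letters m = {0..<m} \<times> UNIV"

definition linv :: "letter \<Rightarrow> letter" where
  "linv a = (fst a, \<not> snd a)"

definition freely_reduced :: "letter list \<Rightarrow> bool" where
  "freely_reduced w = (\<forall>i. Suc i < length w \<longrightarrow> w ! Suc i \<noteq> linv (w ! i))"

text \<open>Probability of the cylinder event (x_0 .. x_{k-1}) = w for the random freely reduced
  infinite word: x_0 uniform on the 2m letters, each next letter uniform among the 2m-1
  letters different from the inverse of the previous one.\<close>
definition cyl_prob :: "nat \<Rightarrow> letter list \<Rightarrow> real" where
  "cyl_prob m w = (if w \<noteq> [] \<and> set w \<subseteq> letters m \<and> freely_reduced w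
     then (1 / (2 * real m)) * (1 / (2 * real m - 1)) ^ (length w - 1) else 0)"

definition cond_prob :: "nat \<Rightarrow> nat \<Rightarrow> letter \<Rightarrow> letter \<Rightarrow> real" where
  "cond_prob m n x y =
     (\<Sum>w\<in>{w. length w = Suc n \<and> set w \<subseteq> letters m \<and> w ! 0 = y \<and> w ! n = x}. cyl_prob m w)
     / (\<Sum>w\<in>{w. length w = Suc n \<and> set w \<subseteq> letters m \<and> w ! 0 = y}. cyl_prob m w)"

definition frak_m :: "nat \<Rightarrow> real" where
  "frak_m m = 1 / (2 * real m - 1)"

definition s_seq :: "nat \<Rightarrow> nat \<Rightarrow> real" where
  "s_seq m n = (\<Sum>k<n. (- frak_m m) ^ k)"

end

theory Submission
  imports Defs
begin

text \<open>Let p_n(x) = Pr(x_n = x | x_0 = y) and m' = 1/(2m-1). Conditioning on x_n, the letter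
  x_{n+1} = x can follow every x_n except x^{-1}, each with probability m', so
  p_{n+1}(x) = m' (1 - p_n(x^{-1})). Since s_{n+1} = 1 - m' s_n, induction yields the closed form
  p_n(x) = m' s_n + [x = y^{(-1)^n}] (-m')^n, and as m' s_{n-1} = m' s_n + (-m')^n,
  the probability p_n(x) is always one of the two bounds m' s_n, m' s_{n-1}.\<close>

lemma finite_letters: "finite (letters m)"
  by (simp add: letters_def)

lemma card_letters: "card (letters m) = 2 * m"
  by (simp add: letters_def card_cartesian_product)

lemma linv_linv [simp]: "linv (linv a) = a"
  by (simp add: linv_def)

lemma linv_eq_iff: "linv a = b \<longleftrightarrow> a = linv b"
  by (metis linv_linv)

lemma linv_in_letters: "a \<in> letters m \<Longrightarrow> linv a \<in> letters m"
  by (simp add: linv_def letters_def mem_Times_iff)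

lemma funpow_linv_in_letters: "a \<in> letters m \<Longrightarrow> (linv ^^ n) a \<in> letters m"
  by (induction n) (simp_all add: linv_in_letters)

lemma finite_words_length:
  "finite {w. length w = Suc n \<and> set w \<subseteq> letters m \<and> P w}"
proof -
  have "finite {w. set w \<subseteq> letters m \<and> length w = Suc n}"
    by (rule finite_lists_length_eq[OF finite_letters])
  then show ?thesis by (rule rev_finite_subset) auto
qed

lemma freely_reduced_snoc:
  assumes "w \<noteq> []"
  shows "freely_reduced (w @ [x]) \<longleftrightarrow> freely_reduced w \<and> x \<noteq> linv (last w)"
proof -
  have last: "last w = w ! (length w - 1)" and len: "length w - 1 < length w"
    using assms by (simp_all add: last_conv_nth)
  have "freely_reduced (w @ [x]) \<longleftrightarrow>
      freely_reduced w \<and> x \<noteq> linv (w ! (length w - 1))"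
    unfolding freely_reduced_def
  proof (intro iffI conjI allI impI)
    fix i assume "\<forall>i. Suc i < length (w @ [x]) \<longrightarrow> (w @ [x]) ! Suc i \<noteq> linv ((w @ [x]) ! i)"
      and "Suc i < length w"
    then show "w ! Suc i \<noteq> linv (w ! i)"
      by (auto simp: nth_append dest: spec[of _ i])
  next
    assume "\<forall>i. Suc i < length (w @ [x]) \<longrightarrow> (w @ [x]) ! Suc i \<noteq> linv ((w @ [x]) ! i)"
    then show "x \<noteq> linv (w ! (length w - 1))"
      using assms len by (auto simp: nth_append dest!: spec[of _ "length w - 1"])
  next
    fix i assume "(\<forall>i. Suc i < length w \<longrightarrow> w ! Suc i \<noteq> linv (w ! i)) \<and>
        x \<noteq> linv (w ! (length w - 1))" and "Suc i < length (w @ [x])"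
    moreover have "Suc i < length w \<or> i = length w - 1"
      using \<open>Suc i < length (w @ [x])\<close> by auto
    ultimately show "(w @ [x]) ! Suc i \<noteq> linv ((w @ [x]) ! i)"
      using len by (auto simp: nth_append)
  qed
  then show ?thesis by (simp add: last)
qed

lemma cyl_prob_snoc:
  assumes "w \<noteq> []"
  shows "cyl_prob m (w @ [x]) =
    (if x \<in> letters m \<and> x \<noteq> linv (last w) then cyl_prob m w / (2 * real m - 1) else 0)"
proof -
  obtain k where "length w = Suc k" using assms by (cases w) auto
  then show ?thesis
    unfolding cyl_prob_def using freely_reduced_snoc[OF assms, of x] by auto
qed

definition path_mass :: "nat \<Rightarrow> nat \<Rightarrow> letter \<Rightarrow> letter \<Rightarrow> real" where
  "path_mass m n y x =
     (\<Sum>w\<in>{w. length w = Suc n \<and> set w \<subseteq> letters m \<and> w ! 0 = y \<and> w ! n = x}. cyl_prob m w)"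

lemma words_ending_in_eq_image_snoc:
  "{w. length w = Suc (Suc n) \<and> set w \<subseteq> letters m \<and> w ! 0 = y \<and> w ! Suc n = x}
   = (\<lambda>w. w @ [x]) ` {w. length w = Suc n \<and> set w \<subseteq> letters m \<and> w ! 0 = y \<and> x \<in> letters m}"
proof (intro set_eqI iffI)
  fix v
  assume v: "v \<in> {w. length w = Suc (Suc n) \<and> set w \<subseteq> letters m \<and> w ! 0 = y \<and> w ! Suc n = x}"
  then have "v \<noteq> []" by auto
  moreover from v \<open>v \<noteq> []\<close> have "last v = x" by (simp add: last_conv_nth)
  ultimately have "v = butlast v @ [x]" by (metis append_butlast_last_id)
  moreover have "x \<in> set v" "butlast v ! 0 = y"
    using v by (auto simp: in_set_conv_nth nth_butlast)
  ultimately show "v \<in> (\<lambda>w. w @ [x]) ` {w. length w = Suc n \<and> set w \<subseteq> letters m \<and> w ! 0 = y \<and> x \<in> letters m}"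
    using v by (auto intro!: image_eqI[of _ _ "butlast v"] dest: in_set_butlastD)
next
  fix v
  assume "v \<in> (\<lambda>w. w @ [x]) ` {w. length w = Suc n \<and> set w \<subseteq> letters m \<and> w ! 0 = y \<and> x \<in> letters m}"
  then show "v \<in> {w. length w = Suc (Suc n) \<and> set w \<subseteq> letters m \<and> w ! 0 = y \<and> w ! Suc n = x}"
    by (auto simp: nth_append)
qed

lemma sum_words_by_last_letter:
  fixes P :: "letter list \<Rightarrow> bool" and A :: "letter set"
  assumes "\<And>w. length w = Suc n \<Longrightarrow> set w \<subseteq> letters m \<Longrightarrow> P w \<Longrightarrow> w ! n \<in> A" "A \<subseteq> letters m"
  shows "(\<Sum>w\<in>{w. length w = Suc n \<and> set w \<subseteq> letters m \<and> P w}. f w)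
       = (\<Sum>z\<in>A. \<Sum>w\<in>{w. length w = Suc n \<and> set w \<subseteq> letters m \<and> P w \<and> w ! n = z}. f w)"
proof (rule sum.group[symmetric, THEN trans])
  show "finite A" using assms(2) finite_letters by (rule finite_subset)
qed (use assms in \<open>auto intro!: sum.cong simp: finite_words_length\<close>)

lemma path_mass_0:
  "path_mass m 0 y x = (if x = y \<and> y \<in> letters m then 1 / (2 * real m) else 0)"
proof -
  have "{w. length w = Suc 0 \<and> set w \<subseteq> letters m \<and> w ! 0 = y \<and> w ! 0 = x}
        = (if x = y \<and> y \<in> letters m then {[y]} else {})"
    by (auto simp: length_Suc_conv)
  then show ?thesis
    by (auto simp: path_mass_def cyl_prob_def freely_reduced_def)
qed

lemma path_mass_Suc:
  assumes x: "x \<in> letters m"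
  shows "path_mass m (Suc n) y x = (\<Sum>z\<in>letters m - {linv x}. path_mass m n y z) / (2 * real m - 1)"
proof -
  let ?V = "{w. length w = Suc n \<and> set w \<subseteq> letters m \<and> w ! 0 = y}"
  have "path_mass m (Suc n) y x = (\<Sum>w\<in>?V. cyl_prob m (w @ [x]))"
    unfolding path_mass_def words_ending_in_eq_image_snoc
    using x by (subst sum.reindex) (auto simp: inj_on_def)
  also have "\<dots> = (\<Sum>w\<in>?V. if w ! n \<noteq> linv x then cyl_prob m w / (2 * real m - 1) else 0)"
  proof (rule sum.cong[OF refl])
    fix w assume w: "w \<in> ?V"
    then have "w \<noteq> []" by auto
    with w have "last w = w ! n" by (simp add: last_conv_nth)
    then show "cyl_prob m (w @ [x]) = (if w ! n \<noteq> linv x then cyl_prob m w / (2 * real m - 1) else 0)"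
      using cyl_prob_snoc[OF \<open>w \<noteq> []\<close>, of m x] x by (auto simp: linv_eq_iff)
  qed
  also have "\<dots> = (\<Sum>w\<in>{w. length w = Suc n \<and> set w \<subseteq> letters m \<and> w ! 0 = y \<and> w ! n \<noteq> linv x}.
      cyl_prob m w) / (2 * real m - 1)"
    by (simp add: sum.inter_filter[symmetric, OF finite_words_length] sum_divide_distrib conj_assoc)
  also have "\<dots> = (\<Sum>z\<in>letters m - {linv x}. path_mass m n y z) / (2 * real m - 1)"
    unfolding path_mass_def
    by (subst sum_words_by_last_letter[where A = "letters m - {linv x}"])
       (auto intro!: sum.cong dest: nth_mem)
  finally show ?thesis .
qed

lemma sum_words_starting_with:
  "(\<Sum>w\<in>{w. length w = Suc n \<and> set w \<subseteq> letters m \<and> w ! 0 = y}. cyl_prob m w)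
   = (\<Sum>z\<in>letters m. path_mass m n y z)"
  unfolding path_mass_def
  by (subst sum_words_by_last_letter[where A = "letters m"]) (auto dest: nth_mem)

lemma frak_m_pos: "m \<ge> 1 \<Longrightarrow> frak_m m > 0"
  by (simp add: frak_m_def)

lemma frak_m_mult: "m \<ge> 1 \<Longrightarrow> (2 * real m - 1) * frak_m m = 1"
  by (simp add: frak_m_def)

lemma s_seq_Suc: "s_seq m (Suc n) = 1 - frak_m m * s_seq m n"
  unfolding s_seq_def sum.lessThan_Suc_shift
  by (simp add: sum_distrib_left sum_negf del: sum.lessThan_Suc)

lemma s_seq_Suc_eq_add: "s_seq m (Suc n) = s_seq m n + (- frak_m m) ^ n"
  by (simp add: s_seq_def)

lemma s_seq_1: "s_seq m (Suc 0) = 1"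
  by (simp add: s_seq_def)

lemma s_seq_2: "s_seq m 2 = 1 - frak_m m"
  by (simp add: numeral_2_eq_2 s_seq_Suc del: s_seq_Suc_eq_add) (simp add: s_seq_def)

lemma one_plus_frak_m_mult_s_seq: "(1 + frak_m m) * s_seq m n = 1 - (- frak_m m) ^ n"
  by (induction n) (simp_all add: s_seq_def algebra_simps)

definition transition_prob :: "nat \<Rightarrow> nat \<Rightarrow> letter \<Rightarrow> letter \<Rightarrow> real" where
  "transition_prob m n y x =
     frak_m m * s_seq m n + (if x = (linv ^^ n) y then (- frak_m m) ^ n else 0)"

lemma sum_transition_prob:
  assumes "m \<ge> 1" "y \<in> letters m"
  shows "(\<Sum>x\<in>letters m. transition_prob m n y x) = 1"
proof -
  have "2 * real m * frak_m m = 1 + frak_m m"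
    using frak_m_mult[OF assms(1)] by (simp add: algebra_simps)
  then have "(\<Sum>x\<in>letters m. transition_prob m n y x)
      = (1 + frak_m m) * s_seq m n + (- frak_m m) ^ n"
    unfolding transition_prob_def sum.distrib
    using funpow_linv_in_letters[OF assms(2), of n] finite_letters[of m]
    by (simp add: card_letters sum.delta' mult.assoc[symmetric])
  then show ?thesis by (simp add: one_plus_frak_m_mult_s_seq)
qed

lemma transition_prob_Suc:
  assumes "m \<ge> 1"
  shows "transition_prob m (Suc n) y x = frak_m m * (1 - transition_prob m n y (linv x))"
  unfolding transition_prob_def s_seq_Suc
  using linv_eq_iff[of x "(linv ^^ n) y"] by (auto simp: algebra_simps)

lemma path_mass_eq_transition_prob:
  assumes "m \<ge> 1" "y \<in> letters m" "x \<in> letters m"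
  shows "path_mass m n y x = transition_prob m n y x / (2 * real m)"
  using assms(3)
proof (induction n arbitrary: x)
  case 0
  then show ?case
    using assms by (simp add: path_mass_0 transition_prob_def s_seq_def)
next
  case (Suc n)
  have "(\<Sum>z\<in>letters m. path_mass m n y z) = 1 / (2 * real m)"
    using Suc.IH sum_transition_prob[OF assms(1,2), of n]
    by (simp add: sum_divide_distrib[symmetric])
  then have "(\<Sum>z\<in>letters m - {linv x}. path_mass m n y z)
      = (1 - transition_prob m n y (linv x)) / (2 * real m)"
    using Suc linv_in_letters[OF Suc.prems] finite_letters
    by (simp add: sum_diff1 diff_divide_distrib)
  then have "path_mass m (Suc n) y x
      = frak_m m * (1 - transition_prob m n y (linv x)) / (2 * real m)"
    using path_mass_Suc[OF Suc.prems, of n y] by (simp add: frak_m_def)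
  then show ?case
    by (simp add: transition_prob_Suc[OF assms(1)])
qed

lemma cond_prob_eq_transition_prob:
  assumes "m \<ge> 1" "y \<in> letters m" "x \<in> letters m"
  shows "cond_prob m n x y = transition_prob m n y x"
proof -
  have "(\<Sum>z\<in>letters m. path_mass m n y z) = 1 / (2 * real m)"
    using path_mass_eq_transition_prob[OF assms(1,2)] sum_transition_prob[OF assms(1,2), of n]
    by (simp add: sum_divide_distrib[symmetric])
  then show ?thesis
    using path_mass_eq_transition_prob[OF assms] assms(1)
    by (simp add: cond_prob_def path_mass_def[symmetric] sum_words_starting_with)
qed

lemma transition_prob_cases:
  assumes "n \<ge> 1"
  shows "transition_prob m n y x = frak_m m * s_seq m n
       \<or> transition_prob m n y x = frak_m m * s_seq m (n - 1)"
proof -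
  obtain k where "n = Suc k" using assms by (cases n) auto
  then have "frak_m m * s_seq m (n - 1) = frak_m m * s_seq m n + (- frak_m m) ^ n"
    by (simp add: s_seq_Suc_eq_add algebra_simps)
  then show ?thesis
    unfolding transition_prob_def by (cases "x = (linv ^^ n) y") simp_all
qed

lemma frak_m_mult_s_seq_2:
  assumes "m \<ge> 1"
  shows "frak_m m * s_seq m 2 = (2 * real m - 2) / (2 * real m - 1)^2"
  unfolding s_seq_2 using assms by (simp add: frak_m_def field_simps power2_eq_square)

theorem corollary2p2:
  fixes m n :: nat and x y :: letter
  assumes "m \<ge> 2" and "n \<ge> 1" and "x \<in> letters m" and "y \<in> letters m"
  shows "min (frak_m m * s_seq m (n - 1)) (frak_m m * s_seq m n) \<le> cond_prob m n x y
       \<and> cond_prob m n x y \<le> max (frak_m m * s_seq m (n - 1)) (frak_m m * s_seq m n)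
       \<and> (2 * real m - 2) / (2 * real m - 1)^2 \<le> cond_prob m 2 x y
       \<and> cond_prob m 2 x y \<le> 1 / (2 * real m - 1)"
proof -
  have m: "m \<ge> 1" using assms(1) by simp
  have cond: "cond_prob m k x y = frak_m m * s_seq m k \<or> cond_prob m k x y = frak_m m * s_seq m (k - 1)"
    if "k \<ge> 1" for k
    using transition_prob_cases[OF that] cond_prob_eq_transition_prob[OF m assms(4,3)] by simp
  have "frak_m m * s_seq m 2 \<le> frak_m m * s_seq m 1"
    using frak_m_pos[OF m] by (simp add: s_seq_1 s_seq_2)
  moreover have "frak_m m * s_seq m 1 = 1 / (2 * real m - 1)"
    by (simp add: s_seq_1 frak_m_def)
  ultimately show ?thesis
    using cond[OF assms(2)] cond[of 2] frak_m_mult_s_seq_2[OF m] by auto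
qed

end
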